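(* Let $g(n,k)$ be the number of $k$-faces of $I(\mathfrak{gl}_n,V\oplus\bigwedge^2)$ and $G_n(t)=\sum_{k=0}^n g(n,k)t^k$. Then for every $n\ge0$ and real $t>0$, writing $r=\sqrt{t(1+t)}$, \[ G_n(t)=\frac{(t+r)(1+t+r)^n-(t-r)(1+t-r)^n}{2r}. \]
   Context: Identify the diagonal Cartan subalgebra of $\mathfrak{gl}_n$ with $\mathbb{R}^n$ with coordinates $x_1,\dots,x_n$. Let $W=\{x_1\ge\cdots\ge x_n\}$ and $W^0=\{x_1>\cdots>x_n\}$. For $1\le i\le j\le n$ let $\lambda_{i,j}^\perp$ be the hyperplane $x_i+x_j=0$ (for $i=j$: $x_i=0$). The arrangement $I(\mathfrak{gl}_n,V\oplus\bigwedge^2)$ consists of these hyperplanes restricted to $W$. Its chambers are the closures of the connected components of $W^0\setminus\bigcup\lambda_{i,j}^\perp$; a face is a chamber or the intersection of a chamber with a supporting hyperplane; a $k$-face is a face whose linear span has dimension $k$. *)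

theory Defs
  imports "HOL-Analysis.Analysis" "HOL-Library.Function_Algebras"
begin

text \<open>Points of R^n are modelled as functions nat => real vanishing outside {0..<n};
  coordinate x_(i+1) of the paper is x i here. The ambient topology on nat => real is the
  product topology (Function_Topology), which on this closed subspace is the Euclidean one.\<close>

definition Rn :: "nat \<Rightarrow> (nat \<Rightarrow> real) set" where
  "Rn n = {x. \<forall>i\<ge>n. x i = 0}"

definition Wcl :: "nat \<Rightarrow> (nat \<Rightarrow> real) set" where
  "Wcl n = {x \<in> Rn n. \<forall>i j. i \<le> j \<longrightarrow> j < n \<longrightarrow> x j \<le> x i}"

definition Wopen :: "nat \<Rightarrow> (nat \<Rightarrow> real) set" where
  "Wopen n = {x \<in> Rn n. \<forall>i j. i < j \<longrightarrow> j < n \<longrightarrow> x j < x i}"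

definition lam_perp :: "nat \<Rightarrow> nat \<Rightarrow> nat \<Rightarrow> (nat \<Rightarrow> real) set" where
  "lam_perp n i j = {x \<in> Rn n. x i + x j = 0}"

definition regular_part :: "nat \<Rightarrow> (nat \<Rightarrow> real) set" where
  "regular_part n = Wopen n - (\<Union>{lam_perp n i j | i j. i \<le> j \<and> j < n})"

definition chambers :: "nat \<Rightarrow> (nat \<Rightarrow> real) set set" where
  "chambers n = {closure (connected_component_set (regular_part n) x) | x. x \<in> regular_part n}"

definition affine_hyperplane :: "nat \<Rightarrow> (nat \<Rightarrow> real) \<Rightarrow> real \<Rightarrow> (nat \<Rightarrow> real) set" where
  "affine_hyperplane n a b = {x \<in> Rn n. (\<Sum>i<n. a i * x i) = b}"

definition supporting_hyperplane :: "nat \<Rightarrow> (nat \<Rightarrow> real) set \<Rightarrow> (nat \<Rightarrow> real) set \<Rightarrow> bool" where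
  "supporting_hyperplane n C H \<longleftrightarrow>
     (\<exists>a b. a \<in> Rn n \<and> (\<exists>i<n. a i \<noteq> 0) \<and> H = affine_hyperplane n a b \<and>
        (\<forall>x\<in>C. (\<Sum>i<n. a i * x i) \<le> b) \<and> C \<inter> H \<noteq> {})"

definition faces :: "nat \<Rightarrow> (nat \<Rightarrow> real) set set" where
  "faces n = chambers n \<union>
     {C \<inter> H | C H. C \<in> chambers n \<and> supporting_hyperplane n C H}"

definition lin_dim :: "(nat \<Rightarrow> real) set \<Rightarrow> nat" where
  "lin_dim S = vector_space.dim (\<lambda>(c::real) (x::nat \<Rightarrow> real) i. c * x i) S"

definition g :: "nat \<Rightarrow> nat \<Rightarrow> nat" where
  "g n k = card {F \<in> faces n. lin_dim F = k}"

definition G :: "nat \<Rightarrow> real \<Rightarrow> real" where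
  "G n t = (\<Sum>k=0..n. real (g n k) * t ^ k)"

end

theory Submission
  imports Defs
begin

text \<open>A regular point x determines a word w: list its coordinates by decreasing absolute value
  and record their signs. The chamber of x is the simplicial cone spanned by the rays
  (1, ..., 1, 0, ..., 0, -1, ..., -1) with a ones and b minus ones, one for each point (a, b) at
  level a + b = 1, ..., n of the monotone lattice path described by w; in suitably signed and
  permuted coordinates it is z_1 \<ge> ... \<ge> z_n \<ge> 0. The faces of a chamber are exactly the subcones
  spanned by subsets of its rays, so the k-faces correspond bijectively to k-element sets of
  lattice points lying on a common monotone path at levels 1, ..., n. Splitting off the lowest
  point (u, d - u) of such a set gives G_n = 1 + t \<Sum>(d = 1..n) (d + 1) G_(n-d), hence
  G_(n+2) = 2 (1 + t) G_(n+1) - (1 + t) G_n with G_0 = 1 and G_1 = 1 + 2t, which the stated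
  formula solves.\<close>
section \<open>Lattice paths of words\<close>

definition ntrue :: "(nat \<Rightarrow> bool) \<Rightarrow> nat \<Rightarrow> nat" where
  "ntrue w k = card {j. j < k \<and> w j}"

definition nfalse :: "(nat \<Rightarrow> bool) \<Rightarrow> nat \<Rightarrow> nat" where
  "nfalse w k = card {j. j < k \<and> \<not> w j}"

lemma ntrue_0 [simp]: "ntrue w 0 = 0" and nfalse_0 [simp]: "nfalse w 0 = 0"
  by (auto simp: ntrue_def nfalse_def)

lemma ntrue_Suc: "ntrue w (Suc k) = ntrue w k + (if w k then 1 else 0)"
proof -
  have "{j. j < Suc k \<and> w j} = (if w k then insert k {j. j < k \<and> w j} else {j. j < k \<and> w j})"
    by (auto simp: less_Suc_eq)
  then show ?thesis by (simp add: ntrue_def)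
qed

lemma nfalse_Suc: "nfalse w (Suc k) = nfalse w k + (if w k then 0 else 1)"
proof -
  have "{j. j < Suc k \<and> \<not> w j} = (if w k then {j. j < k \<and> \<not> w j} else insert k {j. j < k \<and> \<not> w j})"
    by (auto simp: less_Suc_eq)
  then show ?thesis by (simp add: nfalse_def)
qed

lemma ntrue_add_nfalse: "ntrue w k + nfalse w k = k"
  by (induct k) (auto simp: ntrue_Suc nfalse_Suc)

lemma ntrue_mono: "j \<le> k \<Longrightarrow> ntrue w j \<le> ntrue w k"
  unfolding ntrue_def by (rule card_mono) auto

lemma nfalse_mono: "j \<le> k \<Longrightarrow> nfalse w j \<le> nfalse w k"
  unfolding nfalse_def by (rule card_mono) auto

lemma ntrue_shift: "ntrue w (d + j) = ntrue w d + ntrue (\<lambda>i. w (i + d)) j"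
  by (induct j) (auto simp: ntrue_Suc add.commute)

lemma nfalse_shift: "nfalse w (d + j) = nfalse w d + nfalse (\<lambda>i. w (i + d)) j"
  by (induct j) (auto simp: nfalse_Suc add.commute)

text \<open>A word w describes the monotone lattice path in \<nat> \<times> \<nat> from the origin whose j-th step
  (j \<ge> 1) goes in direction (1, 0) if w (j - 1) holds and (0, 1) otherwise.\<close>

definition path_pt :: "(nat \<Rightarrow> bool) \<Rightarrow> nat \<Rightarrow> nat \<times> nat" where
  "path_pt w k = (ntrue w k, nfalse w k)"

lemma path_pt_level: "fst (path_pt w k) + snd (path_pt w k) = k"
  by (simp add: path_pt_def ntrue_add_nfalse)

lemma inj_path_pt: "inj (path_pt w)"
  by (rule injI) (metis path_pt_level)


definition ray :: "nat \<Rightarrow> nat \<times> nat \<Rightarrow> nat \<Rightarrow> real" where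
  "ray n p i = (if i < fst p then 1 else if n - snd p \<le> i \<and> i < n then -1 else 0)"

text \<open>Passing from path point j - 1 to path point j changes exactly one coordinate of the ray,
  namely coordinate step_coord n w j, by step_sign w j.\<close>

definition step_coord :: "nat \<Rightarrow> (nat \<Rightarrow> bool) \<Rightarrow> nat \<Rightarrow> nat" where
  "step_coord n w j = (if w (j - 1) then ntrue w j - 1 else n - nfalse w j)"

definition step_sign :: "(nat \<Rightarrow> bool) \<Rightarrow> nat \<Rightarrow> real" where
  "step_sign w j = (if w (j - 1) then 1 else -1)"

lemma step_sign_square: "step_sign w j * step_sign w j = 1"
  by (simp add: step_sign_def)

lemma ray_Suc_fst: "a + b < n \<Longrightarrow> ray n (Suc a, b) i = ray n (a, b) i + (if i = a then 1 else 0)"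
  by (auto simp: ray_def)

lemma ray_Suc_snd:
  "a + b < n \<Longrightarrow> ray n (a, Suc b) i = ray n (a, b) i + (if i = n - Suc b then -1 else 0)"
  by (auto simp: ray_def)

lemma ray_eq_0: "n \<le> i \<Longrightarrow> fst p \<le> n \<Longrightarrow> ray n p i = 0"
  by (simp add: ray_def)

lemma ray_path_pt_eq_0: "n \<le> i \<Longrightarrow> k \<le> n \<Longrightarrow> ray n (path_pt w k) i = 0"
  using path_pt_level[of w k] by (intro ray_eq_0) auto

lemma ray_path_pt_eq_sum:
  "k \<le> n \<Longrightarrow> ray n (path_pt w k) i = (\<Sum>j\<in>{1..k}. if step_coord n w j = i then step_sign w j else 0)"
proof (induct k)
  case 0
  then show ?case by (simp add: path_pt_def ray_def)
next
  case (Suc k)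
  have "ntrue w k + nfalse w k < n" using Suc.prems ntrue_add_nfalse[of w k] by simp
  moreover have "{1..Suc k} = insert (Suc k) {1..k}" by auto
  ultimately show ?case using Suc
    by (cases "w k") (simp_all add: path_pt_def ntrue_Suc nfalse_Suc ray_Suc_fst ray_Suc_snd
        step_coord_def step_sign_def)
qed

lemma ntrue_step: "w (j - 1) \<Longrightarrow> 1 \<le> j \<Longrightarrow> ntrue w j = Suc (ntrue w (j - 1))"
  using ntrue_Suc[of w "j - 1"] by simp

lemma nfalse_step: "\<not> w (j - 1) \<Longrightarrow> 1 \<le> j \<Longrightarrow> nfalse w j = Suc (nfalse w (j - 1))"
  using nfalse_Suc[of w "j - 1"] by simp

lemma step_coord_less: "1 \<le> j \<Longrightarrow> j \<le> n \<Longrightarrow> step_coord n w j < n"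
  using ntrue_step[of w j] nfalse_step[of w j] ntrue_add_nfalse[of w j]
  by (auto simp: step_coord_def)

lemma step_coord_true_less_ntrue:
  "1 \<le> j \<Longrightarrow> j \<le> n \<Longrightarrow> w (j - 1) \<Longrightarrow> step_coord n w j < ntrue w n"
  using ntrue_step[of w j] ntrue_mono[of j n w] by (auto simp: step_coord_def)

lemma ntrue_le_step_coord_false:
  "1 \<le> j \<Longrightarrow> j \<le> n \<Longrightarrow> \<not> w (j - 1) \<Longrightarrow> ntrue w n \<le> step_coord n w j"
  using nfalse_mono[of j n w] ntrue_add_nfalse[of w n] by (auto simp: step_coord_def)

lemma step_coord_true_strict_mono:
  assumes "1 \<le> k" "k < l" "w (k - 1)" "w (l - 1)"
  shows "step_coord n w k < step_coord n w l"
proof -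
  have "ntrue w k \<le> ntrue w (l - 1)" using assms by (intro ntrue_mono) simp
  then show ?thesis using assms ntrue_step[of w k] ntrue_step[of w l] by (simp add: step_coord_def)
qed

lemma step_coord_false_strict_antimono:
  assumes "1 \<le> k" "k < l" "l \<le> n" "\<not> w (k - 1)" "\<not> w (l - 1)"
  shows "step_coord n w l < step_coord n w k"
proof -
  have "nfalse w k \<le> nfalse w (l - 1)" using assms by (intro nfalse_mono) simp
  moreover have "nfalse w l \<le> n" using assms ntrue_add_nfalse[of w l] by simp
  ultimately show ?thesis using assms nfalse_step[of w k] nfalse_step[of w l]
    by (simp add: step_coord_def)
qed

lemma step_coord_neq:
  assumes "1 \<le> k" "k < l" "l \<le> n"
  shows "step_coord n w k \<noteq> step_coord n w l"
  using assms step_coord_true_strict_mono[of k l w n] step_coord_false_strict_antimono[of k l n w]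
    step_coord_true_less_ntrue[of k n w] ntrue_le_step_coord_false[of l n w]
    step_coord_true_less_ntrue[of l n w] ntrue_le_step_coord_false[of k n w]
  by (cases "w (k - 1)"; cases "w (l - 1)") auto

lemma inj_on_step_coord: "inj_on (step_coord n w) {1..n}"
  by (rule inj_onI) (metis atLeastAtMost_iff linorder_neqE_nat step_coord_neq)

lemma bij_betw_step_coord: "bij_betw (step_coord n w) {1..n} {..<n}"
proof -
  have "step_coord n w ` {1..n} \<subseteq> {..<n}" using step_coord_less by auto
  moreover have "card (step_coord n w ` {1..n}) = card {..<n}"
    using card_image[OF inj_on_step_coord] by simp
  ultimately show ?thesis using inj_on_step_coord by (simp add: bij_betw_def card_subset_eq)
qed

lemma step_coord_surj: "i < n \<Longrightarrow> \<exists>j\<in>{1..n}. step_coord n w j = i"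
  using bij_betw_step_coord[of n w] by (metis bij_betw_imp_surj_on imageE lessThan_iff)

lemma step_coord_true_less_iff:
  assumes "1 \<le> k" "1 \<le> l" "w (k - 1)" "w (l - 1)"
  shows "step_coord n w k < step_coord n w l \<longleftrightarrow> k < l"
  using assms step_coord_true_strict_mono[of k l w n] step_coord_true_strict_mono[of l k w n]
  by (cases k l rule: linorder_cases) auto

lemma step_coord_false_less_iff:
  assumes "1 \<le> k" "k \<le> n" "1 \<le> l" "l \<le> n" "\<not> w (k - 1)" "\<not> w (l - 1)"
  shows "step_coord n w k < step_coord n w l \<longleftrightarrow> l < k"
  using assms step_coord_false_strict_antimono[of k l n w] step_coord_false_strict_antimono[of l k n w]
  by (cases k l rule: linorder_cases) auto

lemma ray_path_pt_step_coord:
  assumes j: "j \<in> {1..n}" and k: "k \<le> n"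
  shows "ray n (path_pt w k) (step_coord n w j) = (if j \<le> k then step_sign w j else 0)"
proof -
  have "(\<Sum>l\<in>{1..k}. if step_coord n w l = step_coord n w j then step_sign w l else 0)
      = (\<Sum>l\<in>{1..k}. if l = j then step_sign w l else 0)"
    using k j inj_onD[OF inj_on_step_coord[of n w]] by (intro sum.cong) auto
  also have "\<dots> = (if j \<le> k then step_sign w j else 0)"
    using j by (simp add: sum.delta)
  finally show ?thesis using ray_path_pt_eq_sum[OF k] by simp
qed

section \<open>Chambers as simplicial cones\<close>

text \<open>chamber_coord vanishes at j = n + 1, so the defining inequalities of a chamber include
  chamber_coord n w z n \<ge> 0.\<close>

definition chamber_coord :: "nat \<Rightarrow> (nat \<Rightarrow> bool) \<Rightarrow> (nat \<Rightarrow> real) \<Rightarrow> nat \<Rightarrow> real" where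
  "chamber_coord n w z j = (if 1 \<le> j \<and> j \<le> n then step_sign w j * z (step_coord n w j) else 0)"

definition chamber :: "nat \<Rightarrow> (nat \<Rightarrow> bool) \<Rightarrow> (nat \<Rightarrow> real) set" where
  "chamber n w = {z \<in> Rn n. \<forall>j\<in>{1..n}. chamber_coord n w z (Suc j) \<le> chamber_coord n w z j}"

definition open_chamber :: "nat \<Rightarrow> (nat \<Rightarrow> bool) \<Rightarrow> (nat \<Rightarrow> real) set" where
  "open_chamber n w = {z \<in> Rn n. \<forall>j\<in>{1..n}. chamber_coord n w z (Suc j) < chamber_coord n w z j}"

definition ray_comb :: "nat \<Rightarrow> (nat \<Rightarrow> bool) \<Rightarrow> nat set \<Rightarrow> (nat \<Rightarrow> real) \<Rightarrow> nat \<Rightarrow> real" where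
  "ray_comb n w I c = (\<lambda>i. \<Sum>k\<in>I. c k * ray n (path_pt w k) i)"

definition ray_cone :: "nat \<Rightarrow> (nat \<Rightarrow> bool) \<Rightarrow> nat set \<Rightarrow> (nat \<Rightarrow> real) set" where
  "ray_cone n w I = {ray_comb n w I c | c. \<forall>k. 0 \<le> c k}"

lemma ray_comb_step_coord:
  assumes I: "I \<subseteq> {1..n}" and j: "j \<in> {1..n}"
  shows "ray_comb n w I c (step_coord n w j) = step_sign w j * (\<Sum>k\<in>{k\<in>I. j \<le> k}. c k)"
proof -
  have "ray_comb n w I c (step_coord n w j) = (\<Sum>k\<in>I. if j \<le> k then step_sign w j * c k else 0)"
    unfolding ray_comb_def using I j ray_path_pt_step_coord by (intro sum.cong) auto
  also have "\<dots> = (\<Sum>k\<in>{k\<in>I. j \<le> k}. step_sign w j * c k)"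
    using I by (simp add: sum.inter_filter finite_subset)
  finally show ?thesis by (simp add: sum_distrib_left)
qed

lemma chamber_coord_ray_comb:
  assumes I: "I \<subseteq> {1..n}" and j: "1 \<le> j"
  shows "chamber_coord n w (ray_comb n w I c) j = (\<Sum>k\<in>{k\<in>I. j \<le> k}. c k)"
proof (cases "j \<le> n")
  case True
  then show ?thesis
    using ray_comb_step_coord[OF I, of j w c] j
    by (simp add: chamber_coord_def mult.assoc[symmetric] step_sign_square)
next
  case False
  then have "{k\<in>I. j \<le> k} = {}" using I by auto
  then show ?thesis using False by (simp only:) (simp add: chamber_coord_def)
qed

lemma sum_filter_ge_diff:
  "finite I \<Longrightarrow> (\<Sum>k\<in>{k\<in>I. j \<le> k}. c k) - (\<Sum>k\<in>{k\<in>I. Suc j \<le> k}. c k)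
     = (if j \<in> I then c j else (0::'a::ab_group_add))"
proof (cases "j \<in> I")
  case True
  then have "{k\<in>I. j \<le> k} = insert j {k\<in>I. Suc j \<le> k}" by auto
  moreover assume "finite I"
  ultimately show ?thesis using True by simp
next
  case False
  then have "{k\<in>I. j \<le> k} = {k\<in>I. Suc j \<le> k}" by (auto simp: le_eq_less_or_eq)
  then show ?thesis using False by simp
qed

lemma chamber_coord_diff_ray_comb:
  assumes I: "I \<subseteq> {1..n}" and j: "1 \<le> j"
  shows "chamber_coord n w (ray_comb n w I c) j - chamber_coord n w (ray_comb n w I c) (Suc j)
           = (if j \<in> I then c j else 0)"
  unfolding chamber_coord_ray_comb[OF I j] chamber_coord_ray_comb[OF I le_SucI[OF j]]
  using finite_subset[OF I] by (rule sum_filter_ge_diff) simp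

lemma ray_comb_in_Rn: "I \<subseteq> {1..n} \<Longrightarrow> ray_comb n w I c \<in> Rn n"
  unfolding Rn_def ray_comb_def using ray_path_pt_eq_0 by (auto intro!: sum.neutral)

lemma ray_comb_nonneg_in_chamber:
  assumes "\<forall>k. 0 \<le> c k"
  shows "ray_comb n w {1..n} c \<in> chamber n w"
proof -
  have "chamber_coord n w (ray_comb n w {1..n} c) (Suc j) \<le> chamber_coord n w (ray_comb n w {1..n} c) j"
    if "j \<in> {1..n}" for j
  proof -
    have "chamber_coord n w (ray_comb n w {1..n} c) j - chamber_coord n w (ray_comb n w {1..n} c) (Suc j)
        = c j"
      using chamber_coord_diff_ray_comb[of "{1..n}" n j w c] that by simp
    then show ?thesis using assms by (metis diff_ge_0_iff_ge)
  qed
  then show ?thesis using ray_comb_in_Rn[of "{1..n}" n w c] by (simp add: chamber_def)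
qed

lemma chamber_in_ray_cone:
  assumes z: "z \<in> chamber n w"
  shows "z \<in> ray_cone n w {1..n}"
proof -
  define c where "c k = (if k \<in> {1..n} then chamber_coord n w z k - chamber_coord n w z (Suc k) else 0)"
    for k
  have "z = ray_comb n w {1..n} c"
  proof
    fix i
    show "z i = ray_comb n w {1..n} c i"
    proof (cases "i < n")
      case False
      then show ?thesis using z ray_path_pt_eq_0[of n i _ w]
        by (auto simp: chamber_def Rn_def ray_comb_def)
    next
      case True
      then obtain j where j: "j \<in> {1..n}" "step_coord n w j = i" using step_coord_surj by blast
      have "{k\<in>{1..n}. j \<le> k} = {j..n}" using j by auto
      then have "ray_comb n w {1..n} c i = step_sign w j * (\<Sum>k\<in>{j..n}. c k)"
        using ray_comb_step_coord[of "{1..n}" n j w c] j by simp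
      also have "(\<Sum>k\<in>{j..n}. c k) = - (\<Sum>k\<in>{j..n}. chamber_coord n w z (Suc k) - chamber_coord n w z k)"
        using j by (simp add: c_def sum_negf[symmetric])
      also have "\<dots> = chamber_coord n w z j - chamber_coord n w z (Suc n)"
        using j by (subst sum_Suc_diff) auto
      also have "chamber_coord n w z (Suc n) = 0" by (simp add: chamber_coord_def)
      finally show ?thesis using j by (simp add: chamber_coord_def mult.assoc[symmetric] step_sign_square)
    qed
  qed
  moreover have "\<forall>k. 0 \<le> c k" using z by (auto simp: c_def chamber_def)
  ultimately show ?thesis by (auto simp: ray_cone_def)
qed

lemma chamber_eq_ray_cone: "chamber n w = ray_cone n w {1..n}"
  using chamber_in_ray_cone ray_comb_nonneg_in_chamber by (auto simp: ray_cone_def)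

section \<open>The chambers of the arrangement\<close>

lemma chamber_coord_linear:
  "chamber_coord n w (\<lambda>i. a * u i + b * v i) j = a * chamber_coord n w u j + b * chamber_coord n w v j"
  by (simp add: chamber_coord_def algebra_simps)

lemma continuous_on_chamber_coord: "continuous_on UNIV (\<lambda>z. chamber_coord n w z j)"
proof (cases "1 \<le> j \<and> j \<le> n")
  case True
  then have "(\<lambda>z. chamber_coord n w z j) = (\<lambda>z. step_sign w j * z (step_coord n w j))"
    by (simp add: chamber_coord_def)
  then show ?thesis
    by (simp only:) (intro continuous_on_mult_left continuous_on_product_coordinates)
next
  case False
  then have "(\<lambda>z. chamber_coord n w z j) = (\<lambda>z. 0)" by (auto simp: chamber_coord_def)
  then show ?thesis by (simp only:) simp
qed

lemma Suc_decreasing_imp_less: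
  fixes s :: "nat \<Rightarrow> 'a::order"
  assumes dec: "\<forall>k\<in>{1..n}. s (Suc k) < s k" and "1 \<le> j" "j < j'" "j' \<le> Suc n"
  shows "s j' < s j"
  using assms(3,4)
proof (induct j')
  case 0
  then show ?case by simp
next
  case (Suc j')
  show ?case
  proof (cases "j = j'")
    case True
    then show ?thesis using dec assms(2) Suc.prems by auto
  next
    case False
    then have "s j' < s j" using Suc by simp
    moreover have "s (Suc j') < s j'" using dec assms(2) Suc.prems False by auto
    ultimately show ?thesis by simp
  qed
qed

lemma open_chamber_coord_less:
  assumes "z \<in> open_chamber n w" "1 \<le> j" "j < j'" "j' \<le> Suc n"
  shows "chamber_coord n w z j' < chamber_coord n w z j"
  using assms by (auto simp: open_chamber_def intro: Suc_decreasing_imp_less[where n = n])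

lemma open_chamber_abs:
  assumes z: "z \<in> open_chamber n w" and j: "j \<in> {1..n}"
  shows "\<bar>z (step_coord n w j)\<bar> = chamber_coord n w z j"
proof -
  have "0 < chamber_coord n w z j"
    using open_chamber_coord_less[OF z, of j "Suc n"] j by (simp add: chamber_coord_def)
  then show ?thesis using j by (auto simp: chamber_coord_def step_sign_def split: if_splits)
qed

lemma open_chamber_coord_neq_0:
  assumes "z \<in> open_chamber n w" "j \<in> {1..n}"
  shows "z (step_coord n w j) \<noteq> 0"
  using open_chamber_abs[OF assms] open_chamber_coord_less[OF assms(1), of j "Suc n"] assms(2)
  by (simp add: chamber_coord_def)

lemma open_chamber_subset_Wopen: "open_chamber n w \<subseteq> Wopen n"
proof
  fix z assume z: "z \<in> open_chamber n w"
  have "z i' < z i" if ii: "i < i'" "i' < n" for i i'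
  proof -
    obtain j where j: "j \<in> {1..n}" "step_coord n w j = i" using step_coord_surj[of i n w] ii by auto
    obtain j' where j': "j' \<in> {1..n}" "step_coord n w j' = i'" using step_coord_surj[of i' n w] ii by auto
    have zj: "z (step_coord n w l) = step_sign w l * chamber_coord n w z l" if "l \<in> {1..n}" for l
      using that by (simp add: chamber_coord_def mult.assoc[symmetric] step_sign_square)
    have pos: "0 < chamber_coord n w z l" if "l \<in> {1..n}" for l
      using open_chamber_coord_less[OF z, of l "Suc n"] that by (simp add: chamber_coord_def)
    consider "w (j - 1)" "w (j' - 1)" | "\<not> w (j - 1)" "\<not> w (j' - 1)" | "w (j - 1)" "\<not> w (j' - 1)"
      | "\<not> w (j - 1)" "w (j' - 1)" by blast
    then show ?thesis
    proof cases
      case 1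
      then have "j < j'" using step_coord_true_less_iff[of j j' w n] j j' ii by auto
      then show ?thesis using open_chamber_coord_less[OF z, of j j'] zj[OF j(1)] zj[OF j'(1)] j j' 1
        by (simp add: step_sign_def)
    next
      case 2
      then have "j' < j" using step_coord_false_less_iff[of j n j' w] j j' ii by auto
      then show ?thesis using open_chamber_coord_less[OF z, of j' j] zj[OF j(1)] zj[OF j'(1)] j j' 2
        by (simp add: step_sign_def)
    next
      case 3
      then show ?thesis using zj[OF j(1)] zj[OF j'(1)] pos[OF j(1)] pos[OF j'(1)] j j'
        by (simp add: step_sign_def)
    next
      case 4
      then show ?thesis
        using ntrue_le_step_coord_false[of j n w] step_coord_true_less_ntrue[of j' n w] j j' ii by auto
    qed
  qed
  then show "z \<in> Wopen n" using z by (simp add: Wopen_def open_chamber_def)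
qed

lemma open_chamber_disjoint_lam_perp:
  assumes z: "z \<in> open_chamber n w" and "i \<le> i'" "i' < n"
  shows "z \<notin> lam_perp n i i'"
proof
  assume "z \<in> lam_perp n i i'"
  then have sum0: "z i + z i' = 0" by (simp add: lam_perp_def)
  obtain j where j: "j \<in> {1..n}" "step_coord n w j = i" using step_coord_surj[of i n w] assms by auto
  obtain j' where j': "j' \<in> {1..n}" "step_coord n w j' = i'" using step_coord_surj[of i' n w] assms by auto
  have "\<bar>z i\<bar> = \<bar>z i'\<bar>" using sum0 by linarith
  then have "chamber_coord n w z j = chamber_coord n w z j'"
    using open_chamber_abs[OF z j(1)] open_chamber_abs[OF z j'(1)] j j' by simp
  then have "j = j'"
    using open_chamber_coord_less[OF z, of j j'] open_chamber_coord_less[OF z, of j' j] j j'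
    by (cases j j' rule: linorder_cases) auto
  then show False using sum0 j j' open_chamber_coord_neq_0[OF z j(1)] by simp
qed

lemma open_chamber_subset_regular_part: "open_chamber n w \<subseteq> regular_part n"
  using open_chamber_subset_Wopen open_chamber_disjoint_lam_perp by (fastforce simp: regular_part_def)

lemma regular_part_chamber_coord_neq:
  assumes y: "y \<in> regular_part n" and j: "j \<in> {1..n}"
  shows "chamber_coord n w y (Suc j) \<noteq> chamber_coord n w y j"
proof
  assume eq: "chamber_coord n w y (Suc j) = chamber_coord n w y j"
  have W: "y \<in> Wopen n" and L: "\<And>i i'. i \<le> i' \<Longrightarrow> i' < n \<Longrightarrow> y \<notin> lam_perp n i i'"
    using y by (auto simp: regular_part_def)
  have R: "y \<in> Rn n" using W by (simp add: Wopen_def)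
  show False
  proof (cases "j = n")
    case True
    then have "y (step_coord n w n) = 0" using eq j by (simp add: chamber_coord_def step_sign_def split: if_splits)
    then show False using L[of "step_coord n w n" "step_coord n w n"] step_coord_less[of n n w] R j True
      by (simp add: lam_perp_def)
  next
    case False
    then have j1: "Suc j \<in> {1..n}" using j by auto
    define a where "a = step_coord n w j"
    define b where "b = step_coord n w (Suc j)"
    have ab: "a \<noteq> b" "a < n" "b < n"
      using inj_onD[OF inj_on_step_coord[of n w] _ j j1] step_coord_less j j1 by (auto simp: a_def b_def)
    have "step_sign w (Suc j) * y b = step_sign w j * y a"
      using eq j j1 by (simp add: chamber_coord_def a_def b_def)
    then have "y b = y a \<or> y b + y a = 0" by (auto simp: step_sign_def split: if_splits)
    then show False
    proof
      assume "y b = y a"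
      then show False using W ab unfolding Wopen_def by (metis (no_types, lifting) linorder_neqE_nat
          mem_Collect_eq order_less_irrefl)
    next
      assume "y b + y a = 0"
      then show False using L[of a b] L[of b a] R ab unfolding lam_perp_def
        by (cases "a \<le> b") (auto simp: add.commute)
    qed
  qed
qed

lemma open_chamber_segment:
  assumes "z1 \<in> open_chamber n w" "z2 \<in> open_chamber n w" "0 \<le> t" "t \<le> 1"
  shows "(\<lambda>i. (1 - t) * z1 i + t * z2 i) \<in> open_chamber n w"
proof -
  have "(\<lambda>i. (1 - t) * z1 i + t * z2 i) \<in> Rn n" using assms by (auto simp: open_chamber_def Rn_def)
  moreover have "(1 - t) * chamber_coord n w z1 (Suc j) + t * chamber_coord n w z2 (Suc j)
      < (1 - t) * chamber_coord n w z1 j + t * chamber_coord n w z2 j" if "j \<in> {1..n}" for j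
  proof -
    have "chamber_coord n w z1 (Suc j) < chamber_coord n w z1 j"
      "chamber_coord n w z2 (Suc j) < chamber_coord n w z2 j"
      using assms that by (auto simp: open_chamber_def)
    moreover have "(1 - t) * chamber_coord n w z1 (Suc j) \<le> (1 - t) * chamber_coord n w z1 j"
      "t * chamber_coord n w z2 (Suc j) \<le> t * chamber_coord n w z2 j"
      using calculation assms(3,4) by (auto intro!: mult_left_mono)
    moreover have "t * chamber_coord n w z2 (Suc j) < t * chamber_coord n w z2 j" if "t \<noteq> 0"
      using calculation(2) assms(3) that by simp
    ultimately show ?thesis by (cases "t = 0") (simp_all add: add_le_less_mono)
  qed
  ultimately show ?thesis by (simp add: open_chamber_def chamber_coord_linear)
qed

lemma open_chamber_subset_connected_component:
  assumes x: "x \<in> open_chamber n w"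
  shows "open_chamber n w \<subseteq> connected_component_set (regular_part n) x"
proof
  fix z assume z: "z \<in> open_chamber n w"
  define p where "p t = (\<lambda>i. (1 - t) * x i + t * z i)" for t :: real
  have "continuous_on {0..1} p" unfolding p_def
    by (intro continuous_on_coordinatewise_then_product continuous_intros)
  then have "connected (p ` {0..1})" by (rule connected_continuous_image) simp
  moreover have "p ` {0..1} \<subseteq> regular_part n"
    using open_chamber_segment[OF x z] by (auto simp: p_def intro!: subsetD[OF open_chamber_subset_regular_part])
  moreover have "x \<in> p ` {0..1}" by (rule image_eqI[of _ _ 0]) (auto simp: p_def)
  moreover have "z \<in> p ` {0..1}" by (rule image_eqI[of _ _ 1]) (auto simp: p_def)
  ultimately show "z \<in> connected_component_set (regular_part n) x"
    by (auto intro: connected_componentI)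
qed

text \<open>A path from the open chamber to a point outside it would cross a wall, which regular
  points avoid.\<close>

lemma connected_component_subset_open_chamber:
  assumes x: "x \<in> open_chamber n w"
  shows "connected_component_set (regular_part n) x \<subseteq> open_chamber n w"
proof
  fix z assume z: "z \<in> connected_component_set (regular_part n) x"
  define C where "C = connected_component_set (regular_part n) x"
  have C: "C \<subseteq> regular_part n" "connected C" by (simp_all add: C_def connected_component_subset)
  have xz: "x \<in> C" "z \<in> C"
    using x z open_chamber_subset_regular_part by (auto simp: C_def connected_component_refl)
  have "chamber_coord n w z (Suc j) < chamber_coord n w z j" if j: "j \<in> {1..n}" for j
  proof (rule ccontr)
    assume not_less: "\<not> ?thesis"
    define f where "f y = chamber_coord n w y j - chamber_coord n w y (Suc j)" for y
    have "continuous_on C f" unfolding f_def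
      by (intro continuous_on_diff continuous_on_subset[OF continuous_on_chamber_coord]) auto
    then have "connected (f ` C)" using C(2) by (rule connected_continuous_image)
    moreover have "f x \<in> f ` C" "f z \<in> f ` C" using xz by auto
    moreover have "f z \<le> 0" "0 < f x" using not_less x j by (auto simp: f_def open_chamber_def)
    ultimately have "0 \<in> f ` C" using connected_contains_Icc[of "f ` C" "f z" "f x"] by auto
    then show False using regular_part_chamber_coord_neq[of _ n j w] C(1) j by (force simp: f_def)
  qed
  moreover have "z \<in> Rn n"
    using z connected_component_subset by (fastforce simp: regular_part_def Wopen_def)
  ultimately show "z \<in> open_chamber n w" by (simp add: open_chamber_def)
qed

lemma connected_component_open_chamber:
  "x \<in> open_chamber n w \<Longrightarrow> connected_component_set (regular_part n) x = open_chamber n w"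
  by (intro equalityI connected_component_subset_open_chamber open_chamber_subset_connected_component)

lemma closed_Rn: "closed (Rn n)"
proof -
  have "Rn n = (\<Inter>i\<in>{n..}. {x. x i = 0})" by (auto simp: Rn_def)
  then show ?thesis by (auto intro!: closed_INT closed_Collect_eq continuous_on_product_coordinates)
qed

lemma closed_chamber: "closed (chamber n w)"
proof -
  have "chamber n w = Rn n \<inter> (\<Inter>j\<in>{1..n}. {z. chamber_coord n w z (Suc j) \<le> chamber_coord n w z j})"
    by (auto simp: chamber_def)
  then show ?thesis
    by (auto intro!: closed_Int closed_Rn closed_INT closed_Collect_le continuous_on_chamber_coord)
qed

definition chamber_center :: "nat \<Rightarrow> (nat \<Rightarrow> bool) \<Rightarrow> nat \<Rightarrow> real" where
  "chamber_center n w = ray_comb n w {1..n} (\<lambda>k. 1)"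

lemma chamber_center_in_open_chamber: "chamber_center n w \<in> open_chamber n w"
  using chamber_coord_diff_ray_comb[of "{1..n}" n _ w "\<lambda>k. 1"] ray_comb_in_Rn[of "{1..n}" n w]
  by (fastforce simp: open_chamber_def chamber_center_def)

lemma chamber_add_open_chamber:
  assumes z: "z \<in> chamber n w" and y: "y \<in> open_chamber n w" and e: "0 < e"
  shows "(\<lambda>i. z i + e * y i) \<in> open_chamber n w"
proof -
  have lin: "chamber_coord n w (\<lambda>i. z i + e * y i) j = chamber_coord n w z j + e * chamber_coord n w y j"
    for j using chamber_coord_linear[of n w 1 z e y j] by simp
  have "chamber_coord n w z (Suc j) + e * chamber_coord n w y (Suc j)
      < chamber_coord n w z j + e * chamber_coord n w y j" if "j \<in> {1..n}" for j
    using z y e that by (intro add_le_less_mono) (auto simp: chamber_def open_chamber_def)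
  moreover have "(\<lambda>i. z i + e * y i) \<in> Rn n"
    using z y by (auto simp: chamber_def open_chamber_def Rn_def)
  ultimately show ?thesis by (simp add: open_chamber_def lin)
qed

lemma closure_open_chamber: "closure (open_chamber n w) = chamber n w"
proof
  have "open_chamber n w \<subseteq> chamber n w" by (auto simp: open_chamber_def chamber_def less_imp_le)
  then show "closure (open_chamber n w) \<subseteq> chamber n w" by (rule closure_minimal) (rule closed_chamber)
next
  show "chamber n w \<subseteq> closure (open_chamber n w)"
  proof
    fix z assume z: "z \<in> chamber n w"
    define h where "h e = (\<lambda>i. z i + e * chamber_center n w i)" for e :: real
    have "h (inverse (real (Suc m))) \<in> open_chamber n w" for m
      unfolding h_def using z chamber_center_in_open_chamber by (rule chamber_add_open_chamber) simp
    moreover have "continuous_on UNIV h" unfolding h_def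
      by (intro continuous_on_coordinatewise_then_product continuous_intros)
    then have "(\<lambda>m. h (inverse (real (Suc m)))) \<longlonglongrightarrow> h 0"
      by (rule continuous_on_tendsto_compose[OF _ LIMSEQ_inverse_real_of_nat]) auto
    moreover have "h 0 = z" by (simp add: h_def)
    ultimately show "z \<in> closure (open_chamber n w)" by (metis closure_sequential)
  qed
qed

text \<open>Position of f i in the list f 0, ..., f (n - 1) sorted decreasingly, counting from 1.\<close>

definition rank_desc :: "nat \<Rightarrow> (nat \<Rightarrow> 'a::linorder) \<Rightarrow> nat \<Rightarrow> nat" where
  "rank_desc n f i = card {l. l < n \<and> f i \<le> f l}"

lemma rank_desc_le_iff:
  assumes "i < n" "l < n"
  shows "rank_desc n f i \<le> rank_desc n f l \<longleftrightarrow> f l \<le> f i"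
proof
  assume "f l \<le> f i"
  then show "rank_desc n f i \<le> rank_desc n f l"
    unfolding rank_desc_def by (intro card_mono) auto
next
  assume le: "rank_desc n f i \<le> rank_desc n f l"
  show "f l \<le> f i"
  proof (rule ccontr)
    assume "\<not> f l \<le> f i"
    then have "{m. m < n \<and> f l \<le> f m} \<subset> {m. m < n \<and> f i \<le> f m}"
      using assms by auto
    then have "rank_desc n f l < rank_desc n f i"
      unfolding rank_desc_def by (intro psubset_card_mono) auto
    then show False using le by simp
  qed
qed

lemma bij_betw_rank_desc:
  assumes inj: "inj_on f {..<n}"
  shows "bij_betw (rank_desc n f) {..<n} {1..n}"
proof -
  have "inj_on (rank_desc n f) {..<n}"
  proof (rule inj_onI)
    fix i l assume il: "i \<in> {..<n}" "l \<in> {..<n}" "rank_desc n f i = rank_desc n f l"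
    then have "f i = f l" using rank_desc_le_iff[of i n l f] rank_desc_le_iff[of l n i f] by auto
    then show "i = l" using inj il by (auto dest: inj_onD)
  qed
  moreover have "rank_desc n f ` {..<n} \<subseteq> {1..n}"
  proof
    fix r assume "r \<in> rank_desc n f ` {..<n}"
    then obtain i where i: "i < n" "r = rank_desc n f i" by auto
    then have "i \<in> {l. l < n \<and> f i \<le> f l}" by simp
    then have "0 < rank_desc n f i" unfolding rank_desc_def by (subst card_gt_0_iff) auto
    moreover have "rank_desc n f i \<le> card {..<n}" unfolding rank_desc_def by (intro card_mono) auto
    ultimately show "r \<in> {1..n}" using i by simp
  qed
  ultimately show ?thesis by (simp add: bij_betw_def card_image card_subset_eq)
qed

lemma card_filter_rank:
  assumes bij: "bij_betw \<rho> A {1..n}" and k: "k \<le> n"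
  shows "card {j. j < k \<and> P (the_inv_into A \<rho> (Suc j))} = card {i\<in>A. \<rho> i \<le> k \<and> P i}"
proof -
  have inj: "inj_on \<rho> A" and img: "\<rho> ` A = {1..n}" using bij by (auto simp: bij_betw_def)
  have "{j. j < k \<and> P (the_inv_into A \<rho> (Suc j))} = (\<lambda>i. \<rho> i - 1) ` {i\<in>A. \<rho> i \<le> k \<and> P i}"
  proof safe
    fix j assume j: "j < k" "P (the_inv_into A \<rho> (Suc j))"
    have "Suc j \<in> \<rho> ` A" using j k img by auto
    then have "the_inv_into A \<rho> (Suc j) \<in> A" "\<rho> (the_inv_into A \<rho> (Suc j)) = Suc j"
      using inj by (auto intro: the_inv_into_into f_the_inv_into_f)
    then show "j \<in> (\<lambda>i. \<rho> i - 1) ` {i\<in>A. \<rho> i \<le> k \<and> P i}"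
      using j by (intro image_eqI[of _ _ "the_inv_into A \<rho> (Suc j)"]) auto
  next
    fix i assume i: "i \<in> A" "\<rho> i \<le> k" "P i"
    have "1 \<le> \<rho> i" using i img by auto
    then show "\<rho> i - 1 < k" "P (the_inv_into A \<rho> (Suc (\<rho> i - 1)))"
      using i inj by (auto simp: the_inv_into_f_f)
  qed
  moreover have "inj_on (\<lambda>i. \<rho> i - 1) {i\<in>A. \<rho> i \<le> k \<and> P i}"
  proof (rule inj_onI)
    fix a b assume ab: "a \<in> {i\<in>A. \<rho> i \<le> k \<and> P i}" "b \<in> {i\<in>A. \<rho> i \<le> k \<and> P i}"
      "\<rho> a - 1 = \<rho> b - 1"
    have "\<rho> a \<in> {1..n}" "\<rho> b \<in> {1..n}" using ab(1,2) img by auto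
    then have "\<rho> a = \<rho> b" using ab(3) by auto
    then show "a = b" using inj ab(1,2) by (auto dest: inj_onD)
  qed
  ultimately show ?thesis by (simp add: card_image)
qed

lemma regular_partD:
  assumes "x \<in> regular_part n"
  shows "x \<in> Rn n" and "\<And>i j. i < j \<Longrightarrow> j < n \<Longrightarrow> x j < x i"
    and "\<And>i. i < n \<Longrightarrow> x i \<noteq> 0" and "inj_on (\<lambda>i. \<bar>x i\<bar>) {..<n}"
proof -
  have W: "x \<in> Wopen n" and L: "\<And>i j. i \<le> j \<Longrightarrow> j < n \<Longrightarrow> x \<notin> lam_perp n i j"
    using assms by (auto simp: regular_part_def)
  show R: "x \<in> Rn n" and dec: "\<And>i j. i < j \<Longrightarrow> j < n \<Longrightarrow> x j < x i"
    using W by (auto simp: Wopen_def)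
  show "x i \<noteq> 0" if "i < n" for i using L[of i i] R that by (simp add: lam_perp_def)
  show "inj_on (\<lambda>i. \<bar>x i\<bar>) {..<n}"
  proof (rule inj_onI)
    fix i l assume il: "i \<in> {..<n}" "l \<in> {..<n}" "\<bar>x i\<bar> = \<bar>x l\<bar>"
    show "i = l"
    proof (cases i l rule: linorder_cases)
      case less
      then have "x i + x l = 0" using dec[of i l] il by (auto simp: abs_if split: if_splits)
      then show ?thesis using L[of i l] R less il by (auto simp: lam_perp_def)
    next
      case greater
      then have "x l + x i = 0" using dec[of l i] il by (auto simp: abs_if split: if_splits)
      then show ?thesis using L[of l i] R greater il by (auto simp: lam_perp_def)
    qed
  qed
qed

lemma regular_part_large_pos:
  assumes x: "x \<in> regular_part n" and i0: "i0 < n" "0 < x i0"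
  shows "{i. i < n \<and> \<bar>x i0\<bar> \<le> \<bar>x i\<bar> \<and> 0 < x i} = {..i0}"
proof (intro set_eqI iffI)
  fix i assume "i \<in> {i. i < n \<and> \<bar>x i0\<bar> \<le> \<bar>x i\<bar> \<and> 0 < x i}"
  then show "i \<in> {..i0}" using regular_partD(2)[OF x, of i0 i] i0 by (cases "i0 < i") auto
next
  fix i assume "i \<in> {..i0}"
  then have "x i0 \<le> x i" using regular_partD(2)[OF x, of i i0] i0 by (cases "i = i0") auto
  then show "i \<in> {i. i < n \<and> \<bar>x i0\<bar> \<le> \<bar>x i\<bar> \<and> 0 < x i}" using \<open>i \<in> {..i0}\<close> i0 by auto
qed

lemma regular_part_large_neg:
  assumes x: "x \<in> regular_part n" and i0: "i0 < n" "x i0 < 0"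
  shows "{i. i < n \<and> \<bar>x i0\<bar> \<le> \<bar>x i\<bar> \<and> \<not> 0 < x i} = {i0..<n}"
proof (intro set_eqI iffI)
  fix i assume "i \<in> {i. i < n \<and> \<bar>x i0\<bar> \<le> \<bar>x i\<bar> \<and> \<not> 0 < x i}"
  then show "i \<in> {i0..<n}" using regular_partD(2)[OF x, of i i0] i0 by (cases "i < i0") auto
next
  fix i assume "i \<in> {i0..<n}"
  then have "x i \<le> x i0" using regular_partD(2)[OF x, of i0 i] by (cases "i = i0") auto
  then show "i \<in> {i. i < n \<and> \<bar>x i0\<bar> \<le> \<bar>x i\<bar> \<and> \<not> 0 < x i}" using \<open>i \<in> {i0..<n}\<close> i0 by auto
qed

text \<open>The word of a regular point x records the signs of its coordinates listed by decreasing
  absolute value.\<close>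

definition sign_word :: "nat \<Rightarrow> (nat \<Rightarrow> real) \<Rightarrow> nat \<Rightarrow> bool" where
  "sign_word n x j = (0 < x (the_inv_into {..<n} (rank_desc n (\<lambda>i. \<bar>x i\<bar>)) (Suc j)))"

lemma sign_word_step:
  assumes x: "x \<in> regular_part n" and i: "i < n" and k: "rank_desc n (\<lambda>i. \<bar>x i\<bar>) i = k"
  shows "step_coord n (sign_word n x) k = i" and "chamber_coord n (sign_word n x) x k = \<bar>x i\<bar>"
proof -
  define \<rho> where "\<rho> = rank_desc n (\<lambda>i. \<bar>x i\<bar>)"
  define w where "w = sign_word n x"
  have bij: "bij_betw \<rho> {..<n} {1..n}"
    unfolding \<rho>_def using regular_partD(4)[OF x] by (rule bij_betw_rank_desc)
  then have k1: "k \<in> {1..n}" using i k by (auto simp: \<rho>_def bij_betw_def)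
  have large: "{l\<in>{..<n}. \<rho> l \<le> k \<and> P l} = {l. l < n \<and> \<bar>x i\<bar> \<le> \<bar>x l\<bar> \<and> P l}" for P
    using rank_desc_le_iff[OF _ i] k by (auto simp: \<rho>_def)
  have "the_inv_into {..<n} \<rho> k = i"
    using bij i k by (auto simp: \<rho>_def bij_betw_def the_inv_into_f_f)
  then have wk: "w (k - 1) \<longleftrightarrow> 0 < x i" using k1 by (simp add: w_def sign_word_def \<rho>_def)
  have "step_coord n w k = i \<and> chamber_coord n w x k = \<bar>x i\<bar>"
  proof (cases "0 < x i")
    case True
    have "ntrue w k = card {l\<in>{..<n}. \<rho> l \<le> k \<and> 0 < x l}"
      unfolding ntrue_def w_def sign_word_def \<rho>_def[symmetric]
      using card_filter_rank[OF bij, of k "\<lambda>l. 0 < x l"] k1 by simp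
    also have "\<dots> = Suc i" unfolding large regular_part_large_pos[OF x i True] by simp
    finally show ?thesis using True wk k1 by (simp add: step_coord_def chamber_coord_def step_sign_def)
  next
    case False
    then have neg: "x i < 0" using regular_partD(3)[OF x i] by simp
    have "nfalse w k = card {l\<in>{..<n}. \<rho> l \<le> k \<and> \<not> 0 < x l}"
      unfolding nfalse_def w_def sign_word_def \<rho>_def[symmetric]
      using card_filter_rank[OF bij, of k "\<lambda>l. \<not> 0 < x l"] k1 by simp
    also have "\<dots> = n - i" unfolding large regular_part_large_neg[OF x i neg] by simp
    finally show ?thesis using neg wk k1 i by (simp add: step_coord_def chamber_coord_def step_sign_def)
  qed
  then show "step_coord n (sign_word n x) k = i" "chamber_coord n (sign_word n x) x k = \<bar>x i\<bar>"
    by (simp_all add: w_def)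
qed

lemma regular_part_in_open_chamber:
  assumes x: "x \<in> regular_part n"
  shows "x \<in> open_chamber n (sign_word n x)"
proof -
  define \<rho> where "\<rho> = rank_desc n (\<lambda>i. \<bar>x i\<bar>)"
  have bij: "bij_betw \<rho> {..<n} {1..n}"
    unfolding \<rho>_def using regular_partD(4)[OF x] by (rule bij_betw_rank_desc)
  have rank_of: "\<exists>i<n. \<rho> i = k" if "k \<in> {1..n}" for k
  proof -
    have "k \<in> \<rho> ` {..<n}" using bij that by (simp add: bij_betw_def)
    then show ?thesis by auto
  qed
  have "chamber_coord n (sign_word n x) x (Suc k) < chamber_coord n (sign_word n x) x k"
    if k: "k \<in> {1..n}" for k
  proof -
    obtain i where i: "i < n" "\<rho> i = k" using rank_of[OF k] by blast
    note cc_i = sign_word_step(2)[OF x i(1) i(2)[unfolded \<rho>_def]]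
    show ?thesis
    proof (cases "k = n")
      case True
      then show ?thesis using cc_i regular_partD(3)[OF x i(1)] by (simp add: chamber_coord_def)
    next
      case False
      then obtain l where l: "l < n" "\<rho> l = Suc k" using rank_of k by force
      have "\<not> \<bar>x i\<bar> \<le> \<bar>x l\<bar>"
        using rank_desc_le_iff[OF l(1) i(1), of "\<lambda>i. \<bar>x i\<bar>"] i l by (simp add: \<rho>_def)
      then show ?thesis using cc_i sign_word_step(2)[OF x l(1) l(2)[unfolded \<rho>_def]] by simp
    qed
  qed
  then show ?thesis using regular_partD(1)[OF x] by (simp add: open_chamber_def)
qed

lemma chambers_eq: "chambers n = range (chamber n)"
proof
  show "chambers n \<subseteq> range (chamber n)"
  proof
    fix C assume "C \<in> chambers n"
    then obtain x where x: "x \<in> regular_part n" "C = closure (connected_component_set (regular_part n) x)"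
      by (auto simp: chambers_def)
    then show "C \<in> range (chamber n)"
      using regular_part_in_open_chamber[OF x(1)] connected_component_open_chamber closure_open_chamber
      by simp
  qed
next
  show "range (chamber n) \<subseteq> chambers n"
  proof
    fix C assume "C \<in> range (chamber n)"
    then obtain w where "C = chamber n w" by blast
    then have "C = closure (connected_component_set (regular_part n) (chamber_center n w))"
      using connected_component_open_chamber[OF chamber_center_in_open_chamber] closure_open_chamber
      by simp
    then show "C \<in> chambers n"
      using chamber_center_in_open_chamber[of n w] open_chamber_subset_regular_part[of n w]
      unfolding chambers_def by blast
  qed
qed

section \<open>Faces of a chamber\<close>

definition lin_form :: "nat \<Rightarrow> (nat \<Rightarrow> real) \<Rightarrow> (nat \<Rightarrow> real) \<Rightarrow> real" where
  "lin_form n a z = (\<Sum>i<n. a i * z i)"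

lemma lin_form_ray_comb:
  "finite I \<Longrightarrow> lin_form n a (ray_comb n w I c) = (\<Sum>k\<in>I. c k * lin_form n a (ray n (path_pt w k)))"
  unfolding lin_form_def ray_comb_def
  by (simp add: sum_distrib_left sum.swap[of _ I] algebra_simps)

lemma ray_comb_restrict:
  assumes "J \<subseteq> I" "finite I" "\<forall>k\<in>I - J. c k = 0"
  shows "ray_comb n w I c = ray_comb n w J c"
  unfolding ray_comb_def using assms by (intro ext sum.mono_neutral_right) auto

lemma ray_cone_mono:
  assumes "J \<subseteq> I" "finite I"
  shows "ray_cone n w J \<subseteq> ray_cone n w I"
proof
  fix z assume "z \<in> ray_cone n w J"
  then obtain c where c: "\<forall>k. 0 \<le> c k" "z = ray_comb n w J c" by (auto simp: ray_cone_def)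
  define c' where "c' k = (if k \<in> J then c k else 0)" for k
  have "ray_comb n w J c = ray_comb n w J c'" unfolding ray_comb_def c'_def by (intro ext sum.cong) auto
  also have "\<dots> = ray_comb n w I c'" using assms by (intro ray_comb_restrict[symmetric]) (auto simp: c'_def)
  finally show "z \<in> ray_cone n w I" using c by (auto simp: ray_cone_def c'_def)
qed

lemma ray_comb_indicator:
  assumes "k \<in> I" "finite I"
  shows "ray_comb n w I (\<lambda>l. if l = k then 1 else 0) = ray n (path_pt w k)"
proof
  fix i
  have "(\<Sum>l\<in>I. (if l = k then 1 else 0) * ray n (path_pt w l) i)
      = (\<Sum>l\<in>I. if l = k then ray n (path_pt w k) i else 0)"
    by (rule sum.cong) auto
  then show "ray_comb n w I (\<lambda>l. if l = k then 1 else 0) i = ray n (path_pt w k) i"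
    using assms by (simp add: ray_comb_def sum.delta')
qed

lemma ray_path_pt_in_chamber: "k \<in> {1..n} \<Longrightarrow> ray n (path_pt w k) \<in> chamber n w"
  using ray_comb_nonneg_in_chamber[of "\<lambda>l. if l = k then 1 else 0" n w] ray_comb_indicator[of k "{1..n}"]
  by simp

lemma chamber_scale:
  assumes "z \<in> chamber n w" "0 \<le> e"
  shows "(\<lambda>i. e * z i) \<in> chamber n w"
  using assms chamber_coord_linear[of n w e z 0 z]
  by (auto simp: chamber_def Rn_def intro: mult_left_mono)

lemma zero_in_chamber: "(\<lambda>i. 0) \<in> chamber n w"
  using chamber_scale[OF ray_comb_nonneg_in_chamber[of "\<lambda>k. 0"], of 0] by simp

lemma chamber_inter_kernel:
  assumes nonpos: "\<forall>k\<in>{1..n}. lin_form n a (ray n (path_pt w k)) \<le> 0"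
  shows "chamber n w \<inter> {z \<in> Rn n. lin_form n a z = 0}
           = ray_cone n w {k\<in>{1..n}. lin_form n a (ray n (path_pt w k)) = 0}"
    (is "_ = ray_cone n w ?I")
proof
  show "chamber n w \<inter> {z \<in> Rn n. lin_form n a z = 0} \<subseteq> ray_cone n w ?I"
  proof
    fix z assume z: "z \<in> chamber n w \<inter> {z \<in> Rn n. lin_form n a z = 0}"
    then obtain c where c: "\<forall>k. 0 \<le> c k" and zc: "z = ray_comb n w {1..n} c"
      by (auto simp: chamber_eq_ray_cone ray_cone_def)
    have "(\<Sum>k\<in>{1..n}. - (c k * lin_form n a (ray n (path_pt w k)))) = 0"
      using z zc lin_form_ray_comb[of "{1..n}" n a w c] by (simp add: sum_negf)
    then have "\<forall>k\<in>{1..n}. c k * lin_form n a (ray n (path_pt w k)) = 0"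
      using nonpos c by (subst (asm) sum_nonneg_eq_0_iff) (auto simp: mult_nonneg_nonpos)
    then have "z = ray_comb n w ?I c" using zc by (intro trans[OF zc] ray_comb_restrict) auto
    then show "z \<in> ray_cone n w ?I" using c by (auto simp: ray_cone_def)
  qed
next
  show "ray_cone n w ?I \<subseteq> chamber n w \<inter> {z \<in> Rn n. lin_form n a z = 0}"
  proof
    fix z assume z: "z \<in> ray_cone n w ?I"
    then obtain c where zc: "z = ray_comb n w ?I c" by (auto simp: ray_cone_def)
    have sub: "?I \<subseteq> {1..n}" by auto
    then have "z \<in> chamber n w" using z ray_cone_mono[of ?I "{1..n}" n w] by (auto simp: chamber_eq_ray_cone)
    moreover have "lin_form n a z = 0" using zc lin_form_ray_comb[of ?I n a w c] by simp
    moreover have "z \<in> Rn n" using zc ray_comb_in_Rn[OF sub] by simp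
    ultimately show "z \<in> chamber n w \<inter> {z \<in> Rn n. lin_form n a z = 0}" by simp
  qed
qed

text \<open>Since chambers are cones, a supporting hyperplane of a chamber passes through the origin.\<close>

lemma supporting_hyperplane_chamber_face:
  assumes S: "supporting_hyperplane n (chamber n w) H"
  obtains I where "I \<subseteq> {1..n}" "chamber n w \<inter> H = ray_cone n w I"
proof -
  obtain a b where H: "H = {z \<in> Rn n. lin_form n a z = b}"
    and le: "\<forall>z\<in>chamber n w. lin_form n a z \<le> b" and ne: "chamber n w \<inter> H \<noteq> {}"
    using S unfolding supporting_hyperplane_def affine_hyperplane_def lin_form_def by blast
  obtain y where y: "y \<in> chamber n w" "lin_form n a y = b" using ne H by auto
  have "lin_form n a (\<lambda>i. 2 * y i) = 2 * lin_form n a y"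
    by (simp add: lin_form_def sum_distrib_left mult.left_commute)
  then have "2 * b \<le> b" using le chamber_scale[OF y(1), of 2] y(2) by fastforce
  moreover have "0 \<le> b" using le zero_in_chamber[of n w] by (fastforce simp: lin_form_def)
  ultimately have b0: "b = 0" by simp
  have "\<forall>k\<in>{1..n}. lin_form n a (ray n (path_pt w k)) \<le> 0"
    using le ray_path_pt_in_chamber b0 by blast
  then have "chamber n w \<inter> H = ray_cone n w {k\<in>{1..n}. lin_form n a (ray n (path_pt w k)) = 0}"
    using chamber_inter_kernel H b0 by simp
  then show thesis by (rule that[rotated]) auto
qed

definition dual_form :: "nat \<Rightarrow> (nat \<Rightarrow> bool) \<Rightarrow> (nat \<Rightarrow> real) \<Rightarrow> nat \<Rightarrow> real" where
  "dual_form n w y i =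
     (if i < n then let j = the_inv_into {1..n} (step_coord n w) i in step_sign w j * (y j - y (j - 1))
      else 0)"

lemma dual_form_in_Rn: "dual_form n w y \<in> Rn n"
  by (simp add: dual_form_def Rn_def)

lemma lin_form_dual_form_ray:
  assumes j: "j \<in> {1..n}"
  shows "lin_form n (dual_form n w y) (ray n (path_pt w j)) = y j - y 0"
proof -
  have bij: "bij_betw (step_coord n w) {1..n} {..<n}" by (rule bij_betw_step_coord)
  have inv: "the_inv_into {1..n} (step_coord n w) (step_coord n w l) = l" if "l \<in> {1..n}" for l
    using the_inv_into_f_f[OF inj_on_step_coord that] .
  have "lin_form n (dual_form n w y) (ray n (path_pt w j))
      = (\<Sum>l\<in>{1..n}. dual_form n w y (step_coord n w l) * ray n (path_pt w j) (step_coord n w l))"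
    unfolding lin_form_def by (rule sum.reindex_bij_betw[OF bij, symmetric])
  also have "\<dots> = (\<Sum>l\<in>{1..n}. if l \<le> j then y l - y (l - 1) else 0)"
    using j ray_path_pt_step_coord step_coord_less inv
    by (intro sum.cong) (auto simp: dual_form_def step_sign_def)
  also have "\<dots> = (\<Sum>l\<in>{Suc 0..j}. y l - y (l - 1))"
    using j by (intro sum.mono_neutral_cong_right) auto
  also have "\<dots> = y j - y 0" by (rule sum_telescope'') simp
  finally show ?thesis .
qed

lemma ray_cone_face:
  assumes I: "I \<subseteq> {1..n}" and nI: "I \<noteq> {1..n}"
  obtains H where "supporting_hyperplane n (chamber n w) H" "chamber n w \<inter> H = ray_cone n w I"
proof -
  define y where "y k = (if k \<in> I \<or> k = 0 then 0 else -1 :: real)" for k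
  define a where "a = dual_form n w y"
  have a_ray: "lin_form n a (ray n (path_pt w j)) = y j" if "j \<in> {1..n}" for j
    using lin_form_dual_form_ray[OF that] by (simp add: a_def y_def)
  have nonpos: "\<forall>k\<in>{1..n}. lin_form n a (ray n (path_pt w k)) \<le> 0" using a_ray by (simp add: y_def)
  have "{k\<in>{1..n}. lin_form n a (ray n (path_pt w k)) = 0} = I"
    using a_ray I by (auto simp: y_def split: if_splits)
  then have face: "chamber n w \<inter> affine_hyperplane n a 0 = ray_cone n w I"
    using chamber_inter_kernel[OF nonpos] by (simp add: affine_hyperplane_def lin_form_def)
  obtain k where k: "k \<in> {1..n}" "k \<notin> I" using I nI by blast
  then have "lin_form n a (ray n (path_pt w k)) \<noteq> 0" using a_ray by (simp add: y_def)
  then have "\<exists>i<n. a i \<noteq> 0" by (auto simp: lin_form_def intro: ccontr)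
  moreover have "\<forall>z\<in>chamber n w. (\<Sum>i<n. a i * z i) \<le> 0"
  proof
    fix z assume "z \<in> chamber n w"
    then obtain c where c: "\<forall>k. 0 \<le> c k" and zc: "z = ray_comb n w {1..n} c"
      by (auto simp: chamber_eq_ray_cone ray_cone_def)
    have "lin_form n a z = (\<Sum>k\<in>{1..n}. c k * lin_form n a (ray n (path_pt w k)))"
      using zc lin_form_ray_comb by simp
    also have "\<dots> \<le> 0" using nonpos c by (intro sum_nonpos) (simp add: mult_nonneg_nonpos)
    finally show "(\<Sum>i<n. a i * z i) \<le> 0" by (simp add: lin_form_def)
  qed
  moreover have "chamber n w \<inter> affine_hyperplane n a 0 \<noteq> {}"
    using zero_in_chamber[of n w] by (auto simp: affine_hyperplane_def Rn_def)
  ultimately have "supporting_hyperplane n (chamber n w) (affine_hyperplane n a 0)"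
    unfolding supporting_hyperplane_def using dual_form_in_Rn[of n w y]
    by (intro exI[of _ a] exI[of _ 0]) (simp add: a_def)
  then show thesis using face by (rule that)
qed

lemma faces_eq: "faces n = {ray_cone n w I | w I. I \<subseteq> {1..n}}"
proof
  show "faces n \<subseteq> {ray_cone n w I | w I. I \<subseteq> {1..n}}"
  proof
    fix F assume "F \<in> faces n"
    then consider w where "F = chamber n w"
      | w H where "supporting_hyperplane n (chamber n w) H" "F = chamber n w \<inter> H"
      unfolding faces_def chambers_eq by blast
    then show "F \<in> {ray_cone n w I | w I. I \<subseteq> {1..n}}"
    proof cases
      case (1 w)
      then show ?thesis using chamber_eq_ray_cone by blast
    next
      case (2 w H)
      obtain I where "I \<subseteq> {1..n}" "chamber n w \<inter> H = ray_cone n w I"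
        by (rule supporting_hyperplane_chamber_face[OF 2(1)])
      then show ?thesis using 2(2) by blast
    qed
  qed
next
  show "{ray_cone n w I | w I. I \<subseteq> {1..n}} \<subseteq> faces n"
  proof safe
    fix w I assume I: "I \<subseteq> {1..n}"
    show "ray_cone n w I \<in> faces n"
    proof (cases "I = {1..n}")
      case True
      then show ?thesis by (auto simp: faces_def chambers_eq chamber_eq_ray_cone)
    next
      case False
      obtain H where "supporting_hyperplane n (chamber n w) H" "chamber n w \<inter> H = ray_cone n w I"
        by (rule ray_cone_face[OF I False])
      then show ?thesis unfolding faces_def chambers_eq by blast
    qed
  qed
qed

section \<open>Faces as chains of lattice points\<close>

definition point_cone :: "nat \<Rightarrow> (nat \<times> nat) set \<Rightarrow> (nat \<Rightarrow> real) set" where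
  "point_cone n S = {(\<lambda>i. \<Sum>p\<in>S. c p * ray n p i) | c. \<forall>p. 0 \<le> c p}"

definition path_chains :: "nat \<Rightarrow> (nat \<times> nat) set set" where
  "path_chains n = {path_pt w ` I | w I. I \<subseteq> {1..n}}"

lemma ray_cone_eq_point_cone:
  assumes I: "I \<subseteq> {1..n}"
  shows "ray_cone n w I = point_cone n (path_pt w ` I)"
proof
  have inj: "inj_on (path_pt w) I" using inj_path_pt by (rule inj_on_subset) simp
  show "ray_cone n w I \<subseteq> point_cone n (path_pt w ` I)"
  proof
    fix z assume "z \<in> ray_cone n w I"
    then obtain c where c: "\<forall>k. 0 \<le> c k" "z = ray_comb n w I c" by (auto simp: ray_cone_def)
    define c' where "c' p = c (fst p + snd p)" for p :: "nat \<times> nat"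
    have "z = (\<lambda>i. \<Sum>p\<in>path_pt w ` I. c' p * ray n p i)"
      unfolding c(2) ray_comb_def by (simp add: sum.reindex[OF inj] c'_def path_pt_level)
    then show "z \<in> point_cone n (path_pt w ` I)" using c(1) by (auto simp: point_cone_def c'_def)
  qed
  show "point_cone n (path_pt w ` I) \<subseteq> ray_cone n w I"
  proof
    fix z assume "z \<in> point_cone n (path_pt w ` I)"
    then obtain c where c: "\<forall>p. 0 \<le> c p" "z = (\<lambda>i. \<Sum>p\<in>path_pt w ` I. c p * ray n p i)"
      by (auto simp: point_cone_def)
    have "z = ray_comb n w I (\<lambda>k. c (path_pt w k))"
      unfolding c(2) ray_comb_def by (simp add: sum.reindex[OF inj])
    then show "z \<in> ray_cone n w I" unfolding ray_cone_def using c(1) by blast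
  qed
qed

lemma faces_eq_point_cone: "faces n = point_cone n ` path_chains n"
proof -
  have "faces n = {point_cone n (path_pt w ` I) | w I. I \<subseteq> {1..n}}"
    unfolding faces_eq by (rule Collect_cong) (metis ray_cone_eq_point_cone)
  then show ?thesis by (auto simp: path_chains_def)
qed

lemma path_chains_level: "S \<in> path_chains n \<Longrightarrow> p \<in> S \<Longrightarrow> 1 \<le> fst p + snd p \<and> fst p + snd p \<le> n"
  unfolding path_chains_def using path_pt_level by fastforce

lemma path_chains_subset:
  assumes "S \<in> path_chains n"
  shows "S \<subseteq> {0..n} \<times> {0..n}"
proof
  fix p assume "p \<in> S"
  then have "fst p + snd p \<le> n" using path_chains_level[OF assms] by blast
  then show "p \<in> {0..n} \<times> {0..n}" by (cases p) auto
qed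

lemma finite_path_chain: "S \<in> path_chains n \<Longrightarrow> finite S"
  by (rule finite_subset[OF path_chains_subset]) simp_all

lemma finite_path_chains: "finite (path_chains n)"
proof -
  have "path_chains n \<subseteq> Pow ({0..n} \<times> {0..n})" using path_chains_subset by blast
  then show ?thesis by (rule finite_subset) simp
qed

lemma card_path_chain_le:
  assumes "S \<in> path_chains n"
  shows "card S \<le> n"
proof -
  obtain w I where S: "S = path_pt w ` I" and I: "I \<subseteq> {1..n}" using assms by (auto simp: path_chains_def)
  then have "card S \<le> card I" by (simp add: card_image_le finite_subset)
  also have "\<dots> \<le> card {1..n}" using I by (intro card_mono) auto
  finally show ?thesis by simp
qed

lemma card_ray_eq:
  assumes "fst p + snd p \<le> n"
  shows "card {i. i < n \<and> ray n p i = 1} = fst p" and "card {i. i < n \<and> ray n p i = -1} = snd p"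
proof -
  have "{i. i < n \<and> ray n p i = 1} = {..<fst p}" "{i. i < n \<and> ray n p i = -1} = {n - snd p..<n}"
    using assms by (auto simp: ray_def)
  then show "card {i. i < n \<and> ray n p i = 1} = fst p" "card {i. i < n \<and> ray n p i = -1} = snd p"
    using assms by simp_all
qed

lemma ray_inj:
  assumes "fst p + snd p \<le> n" "fst q + snd q \<le> n" "ray n p = ray n q"
  shows "p = q"
proof (rule prod_eqI)
  show "fst p = fst q" using card_ray_eq(1)[OF assms(1)] card_ray_eq(1)[OF assms(2)] assms(3) by simp
  show "snd p = snd q" using card_ray_eq(2)[OF assms(1)] card_ray_eq(2)[OF assms(2)] assms(3) by simp
qed

lemma ray_neq_0:
  assumes "1 \<le> fst p + snd p" "fst p + snd p \<le> n"
  shows "ray n p \<noteq> (\<lambda>i. 0)"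
proof
  assume zero: "ray n p = (\<lambda>i. 0)"
  show False
  proof (cases "fst p = 0")
    case True
    then have "ray n p (n - 1) = -1" using assms by (auto simp: ray_def)
    then show False using zero by simp
  next
    case False
    then have "ray n p 0 = 1" by (simp add: ray_def)
    then show False using zero by simp
  qed
qed

lemma ray_in_point_cone: "finite S \<Longrightarrow> p \<in> S \<Longrightarrow> ray n p \<in> point_cone n S"
proof -
  assume S: "finite S" "p \<in> S"
  have "ray n p = (\<lambda>i. \<Sum>q\<in>S. (if q = p then 1 else 0) * ray n q i)"
  proof
    fix i
    have "(\<Sum>q\<in>S. (if q = p then 1 else 0) * ray n q i) = (\<Sum>q\<in>S. if q = p then ray n p i else 0)"
      by (rule sum.cong) auto
    then show "ray n p i = (\<Sum>q\<in>S. (if q = p then 1 else 0) * ray n q i)" using S by (simp add: sum.delta')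
  qed
  then show ?thesis unfolding point_cone_def by (auto intro!: exI[of _ "\<lambda>q. if q = p then 1 else 0"])
qed

lemma nonneg_tail_sums_01_cases:
  fixes c :: "nat \<Rightarrow> real"
  assumes I: "finite I" "0 \<notin> I" and c: "\<forall>k. 0 \<le> c k"
    and tails: "\<And>j. 1 \<le> j \<Longrightarrow> (\<Sum>k\<in>{k\<in>I. j \<le> k}. c k) \<in> {0, 1}"
  obtains "\<forall>k\<in>I. c k = 0" | m where "m \<in> I" "c m = 1" "\<forall>k\<in>I - {m}. c k = 0"
proof -
  define T where "T j = (\<Sum>k\<in>{k\<in>I. j \<le> k}. c k)" for j
  have pos: "1 \<le> k" if "k \<in> I" for k using that I(2) by (cases k) auto
  have c01: "c k = 0 \<or> c k = 1" if "k \<in> I" for k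
  proof -
    have "c k = T k - T (Suc k)"
      using sum_filter_ge_diff[OF I(1), where j = k and c = c] that by (simp add: T_def)
    moreover have "0 \<le> c k" using c by blast
    moreover have "T k = 0 \<or> T k = 1" "T (Suc k) = 0 \<or> T (Suc k) = 1"
      using tails pos[OF that] by (simp_all add: T_def)
    ultimately show ?thesis by (elim disjE) linarith+
  qed
  have "{k\<in>I. 1 \<le> k} = I" using pos by blast
  then have "T 1 = (\<Sum>k\<in>I. c k)" by (simp only: T_def)
  moreover have "T 1 = 0 \<or> T 1 = 1" using tails[of 1] by (simp add: T_def)
  ultimately have sum1: "(\<Sum>k\<in>I. c k) \<le> 1" by linarith
  show thesis
  proof (cases "\<forall>k\<in>I. c k = 0")
    case False
    then obtain m where m: "m \<in> I" "c m = 1" using c01 by blast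
    have "c k = 0" if k: "k \<in> I - {m}" for k
    proof (rule ccontr)
      assume "c k \<noteq> 0"
      then have "c k = 1" using c01 k by blast
      moreover have "(\<Sum>l\<in>{m, k}. c l) \<le> (\<Sum>l\<in>I. c l)" using m k I(1) c by (intro sum_mono2) auto
      ultimately show False using sum1 m k by simp
    qed
    then show thesis using m that(2) by blast
  qed (rule that(1))
qed

text \<open>The chamber coordinates of a ray are -1, 0 or 1, while those of a nonnegative combination of
  the rays of a chamber are tail sums of its coefficients.\<close>

lemma path_pt_of_ray_eq_ray_comb:
  assumes I: "I \<subseteq> {1..n}" and c: "\<forall>k. 0 \<le> c k" and q: "1 \<le> fst q + snd q" "fst q + snd q \<le> n"
    and eq: "ray n q = ray_comb n w I c"
  shows "q \<in> path_pt w ` I"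
proof -
  have fI: "finite I" using I finite_subset by blast
  have tails: "(\<Sum>k\<in>{k\<in>I. j \<le> k}. c k) \<in> {0, 1}" if "1 \<le> j" for j
  proof -
    have "(\<Sum>k\<in>{k\<in>I. j \<le> k}. c k) = chamber_coord n w (ray n q) j"
      using chamber_coord_ray_comb[OF I that, of w c] eq by simp
    moreover have "chamber_coord n w (ray n q) j \<in> {-1, 0, 1}"
      by (auto simp: chamber_coord_def step_sign_def ray_def)
    moreover have "0 \<le> (\<Sum>k\<in>{k\<in>I. j \<le> k}. c k)" using c by (simp add: sum_nonneg)
    ultimately show ?thesis by auto
  qed
  have "0 \<notin> I" using I by auto
  show ?thesis
  proof (rule nonneg_tail_sums_01_cases[OF fI \<open>0 \<notin> I\<close> c tails])
    assume "\<forall>k\<in>I. c k = 0"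
    then have "ray_comb n w I c = (\<lambda>i. 0)" unfolding ray_comb_def by (intro ext sum.neutral) simp
    then show ?thesis using eq ray_neq_0[OF q] by simp
  next
    fix m assume m: "m \<in> I" "c m = 1" "\<forall>k\<in>I - {m}. c k = 0"
    have "ray_comb n w I c = ray_comb n w {m} c" using m fI by (intro ray_comb_restrict) auto
    then have "ray n q = ray n (path_pt w m)" using eq m(2) by (simp add: ray_comb_def)
    moreover have "m \<le> n" using m(1) I by auto
    ultimately have "q = path_pt w m" using ray_inj[of q n "path_pt w m"] q path_pt_level[of w m] by simp
    then show ?thesis using m(1) by blast
  qed
qed

lemma ray_in_point_cone_iff:
  assumes S: "S \<in> path_chains n" and q: "1 \<le> fst q + snd q" "fst q + snd q \<le> n"
  shows "ray n q \<in> point_cone n S \<longleftrightarrow> q \<in> S"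
proof
  assume "ray n q \<in> point_cone n S"
  moreover obtain w I where SI: "S = path_pt w ` I" and I: "I \<subseteq> {1..n}"
    using S by (auto simp: path_chains_def)
  ultimately have "ray n q \<in> ray_cone n w I" using ray_cone_eq_point_cone[OF I, of w] by simp
  then obtain c where "\<forall>k. 0 \<le> c k" "ray n q = ray_comb n w I c" by (auto simp: ray_cone_def)
  then show "q \<in> S" using path_pt_of_ray_eq_ray_comb[OF I _ q] SI by simp
qed (rule ray_in_point_cone[OF finite_path_chain[OF S]])

lemma inj_on_point_cone: "inj_on (point_cone n) (path_chains n)"
proof -
  have sub: "S \<subseteq> S'" if "S \<in> path_chains n" "S' \<in> path_chains n" "point_cone n S = point_cone n S'"
    for S S'
  proof
    fix p assume p: "p \<in> S"
    then have "ray n p \<in> point_cone n S" by (rule ray_in_point_cone[OF finite_path_chain[OF that(1)]])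
    then show "p \<in> S'"
      using ray_in_point_cone_iff[OF that(2)] path_chains_level[OF that(1) p] that(3) by simp
  qed
  show ?thesis
  proof (rule inj_onI)
    fix S S' assume "S \<in> path_chains n" "S' \<in> path_chains n" "point_cone n S = point_cone n S'"
    then show "S = S'" using sub[of S S'] sub[of S' S] by auto
  qed
qed

interpretation fun_vs: vector_space "\<lambda>(c::real) (x::nat \<Rightarrow> real) i. c * x i"
  by unfold_locales (auto simp: fun_eq_iff algebra_simps)

lemma sum_fun_apply: "(\<Sum>p\<in>S. f p) i = (\<Sum>p\<in>S. (f p i :: real))"
  by (induct S rule: infinite_finite_induct) auto

lemma inj_on_path_ray: "inj_on (\<lambda>k. ray n (path_pt w k)) {..n}"
proof (rule inj_onI)
  fix a b assume ab: "a \<in> {..n}" "b \<in> {..n}" "ray n (path_pt w a) = ray n (path_pt w b)"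
  then have "path_pt w a = path_pt w b" by (intro ray_inj[of _ n]) (simp_all add: path_pt_level)
  then show "a = b" by (metis path_pt_level)
qed

lemma independent_path_rays:
  assumes I: "I \<subseteq> {1..n}"
  shows "fun_vs.independent ((\<lambda>k. ray n (path_pt w k)) ` I)"
proof -
  define r where "r k = ray n (path_pt w k)" for k
  have inj: "inj_on r I"
    unfolding r_def using I by (intro inj_on_subset[OF inj_on_path_ray]) auto
  show ?thesis unfolding fun_vs.independent_explicit_module r_def[symmetric]
  proof (intro allI impI)
    fix t u v assume t: "finite t" "t \<subseteq> r ` I" and zero: "(\<Sum>v\<in>t. (\<lambda>i. u v * v i)) = 0"
      and v: "v \<in> t"
    obtain J where J: "J \<subseteq> I" "t = r ` J" using t(2) by (auto simp: subset_image_iff)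
    have JI: "J \<subseteq> {1..n}" using J I by auto
    have "(\<Sum>k\<in>J. (\<lambda>i. u (r k) * r k i)) = 0"
      using zero J sum.reindex[OF inj_on_subset[OF inj J(1)], of "\<lambda>v. (\<lambda>i. u v * v i)"] by simp
    then have comb0: "ray_comb n w J (\<lambda>k. u (r k)) = (\<lambda>i. 0)"
      by (auto simp: ray_comb_def fun_eq_iff sum_fun_apply r_def)
    obtain k where k: "k \<in> J" "v = r k" using v J(2) by auto
    have "chamber_coord n w (ray_comb n w J (\<lambda>k. u (r k))) k
        - chamber_coord n w (ray_comb n w J (\<lambda>k. u (r k))) (Suc k) = u (r k)"
      using chamber_coord_diff_ray_comb[OF JI, of k w "\<lambda>k. u (r k)"] k JI by auto
    moreover have "chamber_coord n w (\<lambda>i. 0) j = 0" for j by (simp add: chamber_coord_def)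
    ultimately show "u v = 0" using comb0 k(2) by simp
  qed
qed

lemma lin_dim_point_cone:
  assumes S: "S \<in> path_chains n"
  shows "lin_dim (point_cone n S) = card S"
proof -
  obtain w I where SI: "S = path_pt w ` I" and I: "I \<subseteq> {1..n}" using S by (auto simp: path_chains_def)
  have "inj_on (ray n) S"
  proof (rule inj_onI)
    fix p q assume "p \<in> S" "q \<in> S" "ray n p = ray n q"
    then show "p = q" using ray_inj[of p n q] path_chains_level[OF S] by blast
  qed
  then have card: "card (ray n ` S) = card S" by (rule card_image)
  have "fun_vs.dim (point_cone n S) = card S"
  proof (rule fun_vs.dim_unique)
    show "ray n ` S \<subseteq> point_cone n S" using ray_in_point_cone[OF finite_path_chain[OF S]] by auto
    show "point_cone n S \<subseteq> fun_vs.span (ray n ` S)"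
    proof
      fix z assume "z \<in> point_cone n S"
      then obtain c where "z = (\<lambda>i. \<Sum>p\<in>S. c p * ray n p i)" by (auto simp: point_cone_def)
      then have "z = (\<Sum>p\<in>S. (\<lambda>i. c p * ray n p i))" by (simp add: fun_eq_iff sum_fun_apply)
      also have "\<dots> \<in> fun_vs.span (ray n ` S)"
      proof (rule fun_vs.span_sum)
        fix p assume "p \<in> S"
        then have "ray n p \<in> fun_vs.span (ray n ` S)" by (intro fun_vs.span_base) simp
        then show "(\<lambda>i. c p * ray n p i) \<in> fun_vs.span (ray n ` S)" by (rule fun_vs.span_scale)
      qed
      finally show "z \<in> fun_vs.span (ray n ` S)" .
    qed
    show "fun_vs.independent (ray n ` S)"
      using independent_path_rays[OF I, of w] SI by (simp add: image_image)
  qed (rule card)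
  then show ?thesis by (simp add: lin_dim_def)
qed

lemma g_eq_card_path_chains: "g n k = card {S \<in> path_chains n. card S = k}"
proof -
  have "{F \<in> faces n. lin_dim F = k} = point_cone n ` {S \<in> path_chains n. card S = k}"
    using lin_dim_point_cone by (auto simp: faces_eq_point_cone)
  moreover have "inj_on (point_cone n) {S \<in> path_chains n. card S = k}"
    using inj_on_point_cone by (rule inj_on_subset) auto
  ultimately show ?thesis by (simp add: g_def card_image)
qed

lemma G_eq_sum_path_chains: "G n t = (\<Sum>S\<in>path_chains n. t ^ card S)"
proof -
  have "(\<Sum>S\<in>path_chains n. t ^ card S)
      = (\<Sum>k\<in>{0..n}. \<Sum>S\<in>{S\<in>path_chains n. card S = k}. t ^ card S)"
    by (rule sum.group[symmetric]) (use finite_path_chains card_path_chain_le in auto)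
  also have "\<dots> = (\<Sum>k\<in>{0..n}. real (card {S \<in> path_chains n. card S = k}) * t ^ k)"
    by (rule sum.cong) auto
  finally show ?thesis by (simp add: G_def g_eq_card_path_chains)
qed

section \<open>Counting chains\<close>

definition pt_add :: "nat \<times> nat \<Rightarrow> nat \<times> nat \<Rightarrow> nat \<times> nat" where
  "pt_add p q = (fst p + fst q, snd p + snd q)"

text \<open>A nonempty chain is determined by its lowest point (u, d - u) and the translate by
  -(u, d - u) of the rest, which is a chain of height n - d.\<close>

definition cons_chain :: "nat \<Rightarrow> nat \<Rightarrow> (nat \<times> nat) set \<Rightarrow> (nat \<times> nat) set" where
  "cons_chain d u S = insert (u, d - u) (pt_add (u, d - u) ` S)"

lemma path_pt_shift: "path_pt w (d + j) = pt_add (path_pt w d) (path_pt (\<lambda>i. w (i + d)) j)"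
  by (simp add: path_pt_def pt_add_def ntrue_shift nfalse_shift)

lemma inj_pt_add: "inj (pt_add p)"
  by (rule injI) (auto simp: pt_add_def prod_eq_iff)

lemma empty_in_path_chains: "{} \<in> path_chains n"
  unfolding path_chains_def by blast

lemma cons_chain_in_path_chains:
  assumes d: "d \<in> {1..n}" and u: "u \<le> d" and S: "S \<in> path_chains (n - d)"
  shows "cons_chain d u S \<in> path_chains n"
proof -
  obtain w' I' where S': "S = path_pt w' ` I'" and I': "I' \<subseteq> {1..n - d}"
    using S by (auto simp: path_chains_def)
  define w where "w j = (if j < u then True else if j < d then False else w' (j - d))" for j
  have "{j. j < d \<and> w j} = {..<u}" using u by (auto simp: w_def)
  then have "path_pt w d = (u, d - u)" using ntrue_add_nfalse[of w d] by (simp add: path_pt_def ntrue_def)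
  moreover have "(\<lambda>i. w (i + d)) = w'" using u by (auto simp: w_def fun_eq_iff)
  ultimately have "cons_chain d u S = path_pt w ` insert d ((+) d ` I')"
    using path_pt_shift[of w d] by (simp add: cons_chain_def S' image_image)
  moreover have "d + j \<le> n" if "j \<in> I'" for j using subsetD[OF I' that] d by auto
  then have "insert d ((+) d ` I') \<subseteq> {1..n}" using d by auto
  ultimately show ?thesis unfolding path_chains_def by blast
qed

lemma path_chains_cons_chain:
  assumes S: "S \<in> path_chains n" and ne: "S \<noteq> {}"
  obtains d u S' where "d \<in> {1..n}" "u \<le> d" "S' \<in> path_chains (n - d)" "S = cons_chain d u S'"
proof -
  obtain w I where SI: "S = path_pt w ` I" and I: "I \<subseteq> {1..n}" using S by (auto simp: path_chains_def)
  have fI: "finite I" using I finite_subset by blast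
  define d where "d = Min I"
  have dI: "d \<in> I" and dmin: "\<And>k. k \<in> I \<Longrightarrow> d \<le> k"
    using fI ne SI by (auto simp: d_def)
  define u where "u = ntrue w d"
  have ud: "u \<le> d" and ptd: "path_pt w d = (u, d - u)"
    using ntrue_add_nfalse[of w d] by (auto simp: u_def path_pt_def)
  define w' where "w' = (\<lambda>i. w (i + d))"
  define I' where "I' = (\<lambda>k. k - d) ` (I - {d})"
  have "I' \<subseteq> {1..n - d}"
    using I dmin by (force simp: I'_def le_less)
  then have S': "path_pt w' ` I' \<in> path_chains (n - d)" unfolding path_chains_def by blast
  have rest: "path_pt w ` (I - {d}) = pt_add (path_pt w d) ` path_pt w' ` I'"
  proof -
    have "path_pt w ` (I - {d}) = (\<lambda>k. path_pt w (d + (k - d))) ` (I - {d})"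
      using dmin by (intro image_cong) auto
    then show ?thesis by (simp add: path_pt_shift w'_def I'_def image_image)
  qed
  have "path_pt w ` I = insert (path_pt w d) (path_pt w ` (I - {d}))" using dI by blast
  then have "S = cons_chain d u (path_pt w' ` I')" using SI ptd rest by (simp add: cons_chain_def)
  moreover have "d \<in> {1..n}" using dI I by auto
  ultimately show thesis using ud S' that by blast
qed

lemma cons_chain_tail_level_gt:
  assumes "S \<in> path_chains m" "q \<in> pt_add (u, d - u) ` S" "u \<le> d"
  shows "d < fst q + snd q"
proof -
  obtain p where p: "p \<in> S" "q = pt_add (u, d - u) p" using assms(2) by blast
  have "1 \<le> fst p + snd p" using path_chains_level[OF assms(1) p(1)] by simp
  then show ?thesis using p(2) assms(3) by (simp add: pt_add_def) linarith
qed

lemma inj_on_cons_chain: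
  "inj_on (\<lambda>(d, u, S). cons_chain d u S) (SIGMA d:{1..n}. {0..d} \<times> path_chains (n - d))"
proof (rule inj_onI, clarsimp)
  fix d u S d' u' S'
  assume d: "u \<le> d" "S \<in> path_chains (n - d)" and d': "u' \<le> d'" "S' \<in> path_chains (n - d')"
    and eq: "cons_chain d u S = cons_chain d' u' S'"
  have "(u, d - u) = (u', d' - u')"
  proof (rule ccontr)
    assume ne: "(u, d - u) \<noteq> (u', d' - u')"
    have "(u, d - u) \<in> cons_chain d u S" "(u', d' - u') \<in> cons_chain d' u' S'"
      by (simp_all add: cons_chain_def)
    then have "(u, d - u) \<in> cons_chain d' u' S'" "(u', d' - u') \<in> cons_chain d u S"
      using eq by simp_all
    then have "(u, d - u) \<in> pt_add (u', d' - u') ` S'" "(u', d' - u') \<in> pt_add (u, d - u) ` S"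
      using ne by (auto simp: cons_chain_def)
    then have "d' < fst (u, d - u) + snd (u, d - u)" "d < fst (u', d' - u') + snd (u', d' - u')"
      using cons_chain_tail_level_gt[OF d'(2) _ d'(1)] cons_chain_tail_level_gt[OF d(2) _ d(1)] by blast+
    then show False using d(1) d'(1) by simp
  qed
  then have u': "u' = u" and d'_eq: "d' = d" using d(1) d'(1) by auto
  have low: "(u, d - u) \<notin> pt_add (u, d - u) ` T" if "T \<in> path_chains m" for T m
    using cons_chain_tail_level_gt[OF that _ d(1), of "(u, d - u)"] d(1) by auto
  have "pt_add (u, d - u) ` S = pt_add (u, d - u) ` S'"
    using eq low[OF d(2)] low[OF d'(2)] insert_ident unfolding cons_chain_def u' d'_eq by metis
  then show "d = d' \<and> u = u' \<and> S = S'" using inj_image_eq_iff[OF inj_pt_add] u' d'_eq by blast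
qed

lemma card_cons_chain:
  assumes "S \<in> path_chains m"
  shows "card (cons_chain d u S) = Suc (card S)"
proof -
  have "(u, d - u) \<notin> pt_add (u, d - u) ` S"
    using path_chains_level[OF assms, of "(0, 0)"] by (auto simp: pt_add_def prod_eq_iff)
  moreover have "card (pt_add (u, d - u) ` S) = card S"
    by (rule card_image[OF inj_on_subset[OF inj_pt_add subset_UNIV]])
  ultimately show ?thesis using finite_path_chain[OF assms] by (simp add: cons_chain_def)
qed

lemma path_chains_eq:
  "path_chains n = insert {} ((\<lambda>(d, u, S). cons_chain d u S) ` (SIGMA d:{1..n}. {0..d} \<times> path_chains (n - d)))"
proof (intro equalityI subsetI)
  fix S assume S: "S \<in> path_chains n"
  show "S \<in> insert {} ((\<lambda>(d, u, S). cons_chain d u S) ` (SIGMA d:{1..n}. {0..d} \<times> path_chains (n - d)))"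
  proof (cases "S = {}")
    case False
    then obtain d u S' where "d \<in> {1..n}" "u \<le> d" "S' \<in> path_chains (n - d)" "S = cons_chain d u S'"
      using path_chains_cons_chain[OF S] by metis
    then show ?thesis by (intro insertI2 image_eqI[of _ _ "(d, u, S')"]) auto
  qed (simp)
qed (auto simp: empty_in_path_chains intro: cons_chain_in_path_chains)

lemma G_recurrence: "G n t = 1 + t * (\<Sum>d\<in>{1..n}. real (Suc d) * G (n - d) t)"
proof -
  let ?D = "SIGMA d:{1..n}. {0..d} \<times> path_chains (n - d)"
  let ?cons = "\<lambda>(d, u, S). cons_chain d u S"
  have fin: "finite ?D" using finite_path_chains by (intro finite_SigmaI) auto
  have "{} \<notin> ?cons ` ?D" by (auto simp: cons_chain_def)
  then have "G n t = t ^ card ({} :: (nat \<times> nat) set) + (\<Sum>S\<in>?cons ` ?D. t ^ card S)"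
    unfolding G_eq_sum_path_chains path_chains_eq[of n] by (rule sum.insert[OF finite_imageI[OF fin]])
  then have "G n t = 1 + (\<Sum>S\<in>?cons ` ?D. t ^ card S)" by simp
  also have "(\<Sum>S\<in>?cons ` ?D. t ^ card S) = (\<Sum>x\<in>?D. t ^ card (?cons x))"
    using sum.reindex[OF inj_on_cons_chain] by (simp add: comp_def)
  also have "\<dots> = (\<Sum>(d, u, S)\<in>?D. t * t ^ card S)"
    by (intro sum.cong) (auto simp: card_cons_chain)
  also have "\<dots> = (\<Sum>d\<in>{1..n}. \<Sum>(u, S)\<in>{0..d} \<times> path_chains (n - d). t * t ^ card S)"
    by (subst sum.Sigma) (auto simp: finite_path_chains)
  also have "\<dots> = (\<Sum>d\<in>{1..n}. real (Suc d) * (\<Sum>S\<in>path_chains (n - d). t * t ^ card S))"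
    by (simp add: sum.cartesian_product[symmetric])
  also have "\<dots> = t * (\<Sum>d\<in>{1..n}. real (Suc d) * G (n - d) t)"
    by (simp add: G_eq_sum_path_chains sum_distrib_left mult.left_commute)
  finally show ?thesis .
qed

section \<open>The generating function\<close>

lemma G_0: "G 0 t = 1"
  using G_recurrence[of 0 t] by simp

lemma G_1: "G 1 t = 1 + 2 * t"
  using G_recurrence[of 1 t] G_0[of t] by simp

text \<open>With A m = \<Sum>j<m. (m - j + 1) G j and B m = \<Sum>j<m. G j the recurrence reads G m = 1 + t A m,
  and A (m + 1) = A m + B m + 2 G m, B (m + 1) = B m + G m; eliminating A and B leaves a
  three-term recurrence.\<close>

lemma G_Suc_Suc: "G (Suc (Suc n)) t = 2 * (1 + t) * G (Suc n) t - (1 + t) * G n t"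
proof -
  define A where "A m = (\<Sum>j<m. real (m - j + 1) * G j t)" for m
  define B where "B m = (\<Sum>j<m. G j t)" for m
  have GA: "G m t = 1 + t * A m" for m
  proof -
    have "(\<Sum>d\<in>{1..m}. real (Suc d) * G (m - d) t) = A m"
      unfolding A_def by (rule sum.reindex_bij_witness[of _ "\<lambda>j. m - j" "\<lambda>d. m - d"]) auto
    then show ?thesis using G_recurrence[of m t] by simp
  qed
  have A_Suc: "A (Suc m) = A m + B m + 2 * G m t" for m
  proof -
    have "A (Suc m) = (\<Sum>j<m. real (Suc m - j + 1) * G j t) + 2 * G m t" by (simp add: A_def)
    also have "(\<Sum>j<m. real (Suc m - j + 1) * G j t) = (\<Sum>j<m. real (m - j + 1) * G j t + G j t)"
      by (rule sum.cong) (auto simp: Suc_diff_le algebra_simps of_nat_diff)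
    finally show ?thesis by (simp add: A_def B_def sum.distrib)
  qed
  have B_Suc: "B (Suc m) = B m + G m t" for m by (simp add: B_def)
  have "G (Suc n) t - G n t = t * (B n + 2 * G n t)"
    using GA[of n] GA[of "Suc n"] A_Suc[of n] by (simp add: algebra_simps)
  moreover have "G (Suc (Suc n)) t - G (Suc n) t = t * (B n + G n t + 2 * G (Suc n) t)"
    using GA[of "Suc n"] GA[of "Suc (Suc n)"] A_Suc[of "Suc n"] B_Suc[of n] by (simp add: algebra_simps)
  ultimately show ?thesis by (simp add: algebra_simps)
qed

lemma power_Suc_Suc_of_root:
  fixes x a b :: real
  assumes "x * x = a * x - b"
  shows "x ^ Suc (Suc n) = a * x ^ Suc n - b * x ^ n"
proof -
  have "x ^ Suc (Suc n) = x ^ n * (x * x)" by (simp add: algebra_simps)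
  also have "\<dots> = a * x ^ Suc n - b * x ^ n" unfolding assms by (simp add: algebra_simps)
  finally show ?thesis .
qed

lemma G_closed_form:
  fixes t :: real
  assumes t: "0 < t"
  defines "r \<equiv> sqrt (t * (1 + t))"
  shows "G n t = ((t + r) * (1 + t + r) ^ n - (t - r) * (1 + t - r) ^ n) / (2 * r)"
proof -
  have "0 < t * (1 + t)" using t by simp
  then have r: "0 < r" "r * r = t + t * t" by (simp_all add: r_def algebra_simps)
  define f where "f k = ((t + r) * (1 + t + r) ^ k - (t - r) * (1 + t - r) ^ k) / (2 * r)" for k
  have "(1 + t + r) * (1 + t + r) = 2 * (1 + t) * (1 + t + r) - (1 + t)"
    "(1 + t - r) * (1 + t - r) = 2 * (1 + t) * (1 + t - r) - (1 + t)"
    using r(2) by (simp_all add: algebra_simps)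
  note roots = this[THEN power_Suc_Suc_of_root]
  have f_Suc_Suc: "f (Suc (Suc k)) = 2 * (1 + t) * f (Suc k) - (1 + t) * f k" for k
    unfolding f_def roots using r(1) by (simp add: field_simps)
  have "G n t = f n"
  proof (induction n rule: induct_nat_012)
    case 0
    show ?case using r(1) by (simp add: G_0 f_def)
  next
    case 1
    have "G (Suc 0) t = 1 + 2 * t" using G_1 by simp
    then show ?case using r by (simp add: f_def field_simps)
  next
    case (ge2 n)
    then show ?case by (simp add: G_Suc_Suc f_Suc_Suc)
  qed
  then show ?thesis by (simp add: f_def)
qed

theorem corollary1p6:
  fixes n :: nat and t :: real
  assumes "t > 0"
  shows "G n t =
    (let r = sqrt (t * (1 + t)) in
      ((t + r) * (1 + t + r) ^ n - (t - r) * (1 + t - r) ^ n) / (2 * r))"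
  using G_closed_form[OF assms] by (simp add: Let_def)

end
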